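(* Let $i,i+(r-a),\ldots,i+s(r-a)$ be an $L$-brick. The restriction of the divisor $Z_{i+s(r-a)}$ to the $L$-resolution is equal to the divisor $Z^L_i$. If $i,i+a,\ldots,i+sa$ is an $R$-brick, then the restriction of the divisor $Z_i$ to the $R$-resolution is equal to the divisor $Z^R_i$.
   Context: Let $0<a<r$ be coprime integers, $b$ the inverse of $a$ modulo $r$, and for integers $s,t$ let $(s \bmod t)$ denote the least non-negative integer $u$ with $t\mid s-u$. Let $N=\mathbb{Z}^3+\mathbb{Z}\frac1r(1,a,r-a)$, and $p_i=\frac1r\big((-ib \bmod r),\,r-i,\,i\big)$ for $i=0,\ldots,r$ (so $p_0=e_2$, $p_r=e_3$, $p_{r-a}=\frac1r(1,a,r-a)$). The Danilov resolution of the toric singularity $\frac1r(1,a,r-a)$ (cone $\langle e_1,e_2,e_3\rangle$ in $N$) is obtained by the weighted blow-up at $p_{r-a}$ followed recursively by the Danilov resolutions of the cones $\langle e_1,e_2,p_{r-a}\rangle$ and $\langle e_1,e_3,p_{r-a}\rangle$, which are toric singularities of type $\frac{1}{r-a}(1,(r \bmod (r-a)),(-r \bmod (r-a)))$ and $\frac1a(1,(-r \bmod a),(r \bmod a))$ respectively (via lattice isomorphisms fixing $e_1$ and sending the last, resp. second, basis vector to $p_{r-a}$). The resolutions of these two subcones are called the $L$-resolution and the $R$-resolution. Let $D_k$ be the toric divisor of the ray through $p_k$. The permutation $\tau(r,a,\cdot)$ of $\{0,\ldots,r-1\}$ is defined recursively: if $a\in\{1,r-1\}$, $\tau(r,a,i)=(ai-1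 \bmod r)$; otherwise $\tau(r,a,i)=\tau(r-a,(r\bmod (r-a)),(i \bmod (r-a)))$ if $i\ge a$, and $\tau(r,a,i)=(r-a)+\tau(a,(-r \bmod a),i)$ if $i<a$. Set $Z_i=\sum_{k=\tau(r,a,i)+1}^{r}D_k$ for $i=0,\ldots,r-1$. The divisors $Z^L_i$ (resp. $Z^R_i$) on the $L$- (resp. $R$-)resolution are defined by the same formula with $(r,a)$ replaced by $(r-a,(r\bmod(r-a)))$ (resp. $(a,(-r\bmod a))$). A sequence $i,i+(r-a),\ldots,i+s(r-a)$ is an $L$-brick if $i<r-a$, $i+(s+1)(r-a)>r$ and every term is $<r$; a sequence $i,i+a,\ldots,i+sa$ is an $R$-brick if $i<a$, $i+(s+1)a>r$ and every term is $<r$. *)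

theory Defs
  imports Complex_Main
begin

type_synonym vec = "rat \<times> rat \<times> rat"

definition e1 :: vec where "e1 = (1, 0, 0)"
definition e2 :: vec where "e2 = (0, 1, 0)"
definition e3 :: vec where "e3 = (0, 0, 1)"

definition inv_mod :: "nat \<Rightarrow> nat \<Rightarrow> nat" where
  "inv_mod r a = (THE b. b < r \<and> (a * b) mod r = 1 mod r)"

definition pt :: "nat \<Rightarrow> nat \<Rightarrow> nat \<Rightarrow> vec" where
  "pt r a k = (of_int ((- int k * int (inv_mod r a)) mod int r) / of_nat r,
               (of_int (int r - int k)) / of_nat r,
               of_nat k / of_nat r)"

definition aL :: "nat \<Rightarrow> nat \<Rightarrow> nat" where "aL r a = r mod (r - a)"
definition aR :: "nat \<Rightarrow> nat \<Rightarrow> nat" where "aR r a = nat ((- int r) mod int a)"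

text \<open>Lattice isomorphisms onto the L-cone <e1,e2,p_{r-a}> (e1,e2 fixed, e3 to p_{r-a})
  and onto the R-cone <e1,e3,p_{r-a}> (e1,e3 fixed, e2 to p_{r-a}), p_{r-a} = 1/r(1,a,r-a).\<close>
definition phiL :: "nat \<Rightarrow> nat \<Rightarrow> vec \<Rightarrow> vec" where
  "phiL r a w = (case w of (x, y, z) \<Rightarrow>
     (x + z / of_nat r, y + z * of_nat a / of_nat r, z * of_nat (r - a) / of_nat r))"

definition phiR :: "nat \<Rightarrow> nat \<Rightarrow> vec \<Rightarrow> vec" where
  "phiR r a w = (case w of (x, y, z) \<Rightarrow>
     (x + y / of_nat r, y * of_nat a / of_nat r, z + y * of_nat (r - a) / of_nat r))"

text \<open>The Danilov resolution of 1/r(1,a,r-a), as its set of maximal cones, each cone given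
  by its set of ray generators. If the cone is smooth (r = 1, or degenerate input) it is the
  cone itself; otherwise weighted blow-up at p_{r-a} gives the smooth cone <e2,e3,p_{r-a}>
  together with the (transported) Danilov resolutions of the L- and R-cones.\<close>
function danilov_fan :: "nat \<Rightarrow> nat \<Rightarrow> vec set set" where
  "danilov_fan r a =
    (if 0 < a \<and> a < r then
       {{e2, e3, pt r a (r - a)}}
       \<union> (\<lambda>C. phiL r a ` C) ` danilov_fan (r - a) (aL r a)
       \<union> (\<lambda>C. phiR r a ` C) ` danilov_fan a (aR r a)
     else {{e1, e2, e3}})"
  by pat_completeness auto
termination
  by (relation "measure (\<lambda>(r, a). r)") auto

definition fan_rays :: "vec set set \<Rightarrow> vec set" where
  "fan_rays F = \<Union> F"

function tau :: "nat \<Rightarrow> nat \<Rightarrow> nat \<Rightarrow> nat" where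
  "tau r a i =
    (if a = 1 \<or> a = r - 1 then nat ((int a * int i - 1) mod int r)
     else if 0 < a \<and> a < r then
       (if a \<le> i then tau (r - a) (r mod (r - a)) (i mod (r - a))
        else (r - a) + tau a (nat ((- int r) mod int a)) i)
     else 0)"
  by pat_completeness auto
termination
  by (relation "measure (\<lambda>(r, a, i). r)") auto

text \<open>Toric divisors on the Danilov resolution of 1/r(1,a,r-a), represented by their
  coefficient at each ray (ray identified with its primitive generator).\<close>
definition Ddiv :: "nat \<Rightarrow> nat \<Rightarrow> nat \<Rightarrow> vec \<Rightarrow> int" where
  "Ddiv r a k = (\<lambda>v. if v = pt r a k then 1 else 0)"

definition Zdiv :: "nat \<Rightarrow> nat \<Rightarrow> nat \<Rightarrow> vec \<Rightarrow> int" where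
  "Zdiv r a i = (\<lambda>v. \<Sum>k\<in>{tau r a i + 1..r}. Ddiv r a k v)"

definition L_brick :: "nat \<Rightarrow> nat \<Rightarrow> nat \<Rightarrow> nat \<Rightarrow> bool" where
  "L_brick r a i s \<longleftrightarrow> i < r - a \<and> i + (s + 1) * (r - a) > r \<and> (\<forall>t\<le>s. i + t * (r - a) < r)"

definition R_brick :: "nat \<Rightarrow> nat \<Rightarrow> nat \<Rightarrow> nat \<Rightarrow> bool" where
  "R_brick r a i s \<longleftrightarrow> i < a \<and> i + (s + 1) * a > r \<and> (\<forall>t\<le>s. i + t * a < r)"

text \<open>Restriction of a divisor on the Danilov resolution of 1/r(1,a,r-a) to the open
  L- (resp. R-) resolution, expressed on the rays of that resolution in its own lattice
  (transported through phiL, resp. phiR): a toric divisor restricts to the open toric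
  subvariety by keeping the coefficients of the rays of the subfan.\<close>
definition restrL :: "nat \<Rightarrow> nat \<Rightarrow> (vec \<Rightarrow> int) \<Rightarrow> vec \<Rightarrow> int" where
  "restrL r a D = (\<lambda>w. D (phiL r a w))"

definition restrR :: "nat \<Rightarrow> nat \<Rightarrow> (vec \<Rightarrow> int) \<Rightarrow> vec \<Rightarrow> int" where
  "restrR r a D = (\<lambda>w. D (phiR r a w))"

end

theory Submission
  imports Defs "HOL-Number_Theory.Cong"
begin

text \<open>The lattice isomorphisms phiL and phiR fix e1 and send p^L_k to p_k and p^R_k to
  p_{r-a+k}; on first coordinates this is a congruence computation with the modular inverses.
  Hence the restriction of Z_j to the L-resolution is the sum of the D^L_k with
  tau(r,a,j) < k, and both claims reduce to the recursion of tau, extended to its base cases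
  a = 1 and a = r - 1: tau(r,a,j) = tau^L(j mod (r-a)) for a \<le> j < r, and
  tau(r,a,i) = (r-a) + tau^R(i) for i < a. The last element of an L-brick and the first
  element of an R-brick lie in these ranges.\<close>

declare danilov_fan.simps[simp del] tau.simps[simp del]

lemma zero_if_coprime_dvd_abs_less:
  fixes m n x :: int
  assumes "coprime m n" "m dvd x" "n dvd x" "\<bar>x\<bar> < m * n"
  shows "x = 0"
proof (rule ccontr)
  assume "x \<noteq> 0"
  moreover have "m * n dvd x" using divides_mult[OF assms(2,3,1)] .
  ultimately have "\<bar>m * n\<bar> \<le> \<bar>x\<bar>" by (rule dvd_imp_le_int)
  then show False using assms(4) by linarith
qed

lemma mod_eq_of_add_mult:
  fixes x m q y :: int
  assumes "0 \<le> x" "x < m" "y = x + m * q"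
  shows "y mod m = x"
  using assms by simp

text \<open>Clearing denominators in the first coordinates of phiL p^L_k = p_k and
  phiR p^R_k = p_{r-a+k}.\<close>

lemma residue_identity_L:
  fixes R D K B B' :: int
  assumes "0 < D" "D < R" "0 \<le> K" "K \<le> D" "coprime R D"
    "[R * B' = 1] (mod D)" "[(R - D) * B = 1] (mod R)"
  shows "R * ((- K * B') mod D) + K = ((- K * B) mod R) * D"
proof -
  define u where "u = (- K * B') mod D"
  define c where "c = (- K * B) mod R"
  define x where "x = R * u + K - c * D"
  have u: "D dvd (- K * B') - u" and c: "R dvd (- K * B) - c"
    unfolding u_def c_def by (rule dvd_minus_mod)+
  have B': "D dvd R * B' - 1" and B: "R dvd (R - D) * B - 1"
    using assms(6,7) by (simp_all add: cong_iff_dvd_diff)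
  have "x = - (K * (R * B' - 1)) - R * ((- K * B') - u) - c * D"
    unfolding x_def by (simp add: algebra_simps)
  then have "D dvd x" by (simp only: dvd_diff dvd_mult dvd_minus_iff dvd_triv_right u B')
  have "x = R * (u - c) - (R - D) * ((- K * B) - c) - K * ((R - D) * B - 1)"
    unfolding x_def by (simp add: algebra_simps)
  then have "R dvd x" by (simp only: dvd_diff dvd_mult dvd_triv_left c B)
  have "0 \<le> u" "u \<le> D - 1" "0 \<le> c" "c \<le> R - 1"
    using assms(1,2) unfolding u_def c_def by simp_all
  then have "0 \<le> R * u" "R * u \<le> R * D - R" "0 \<le> c * D" "c * D \<le> R * D - D"
    using assms(1,2) mult_left_mono[of u "D - 1" R] mult_right_mono[of c "R - 1" D]
    by (simp_all add: algebra_simps)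
  then have "\<bar>x\<bar> < R * D"
    unfolding x_def using assms(1-4) by linarith
  then have "x = 0"
    using zero_if_coprime_dvd_abs_less[OF assms(5) \<open>R dvd x\<close> \<open>D dvd x\<close>] by blast
  then show ?thesis unfolding x_def u_def c_def by simp
qed

lemma residue_identity_R:
  fixes R A K B B' :: int
  assumes "0 < A" "A < R" "0 \<le> K" "K \<le> A" "coprime R A"
    "[(- R) * B' = 1] (mod A)" "[A * B = 1] (mod R)"
  shows "R * ((- K * B') mod A) + A - K = ((- (R - A + K) * B) mod R) * A"
proof -
  define u where "u = (- K * B') mod A"
  define c where "c = (- (R - A + K) * B) mod R"
  define x where "x = R * u + A - K - c * A"
  have u: "A dvd (- K * B') - u" and c: "R dvd (- (R - A + K) * B) - c"
    unfolding u_def c_def by (rule dvd_minus_mod)+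
  have B': "A dvd (- R) * B' - 1" and B: "R dvd A * B - 1"
    using assms(6,7) by (simp_all add: cong_iff_dvd_diff)
  have "x = K * ((- R) * B' - 1) - R * ((- K * B') - u) + A * (1 - c)"
    unfolding x_def by (simp add: algebra_simps)
  then have "A dvd x" by (simp only: dvd_add dvd_diff dvd_mult dvd_triv_left u B')
  have "x = R * (u + 1) + A * ((- (R - A + K) * B) - c) + (R - A + K) * (A * B - 1)"
    unfolding x_def by (simp add: algebra_simps)
  then have "R dvd x" by (simp only: dvd_add dvd_mult dvd_triv_left c B)
  have "0 \<le> u" "u \<le> A - 1" "0 \<le> c" "c \<le> R - 1"
    using assms(1,2) unfolding u_def c_def by simp_all
  then have "0 \<le> R * u" "R * u \<le> R * A - R" "0 \<le> c * A" "c * A \<le> R * A - A"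
    using assms(1,2) mult_left_mono[of u "A - 1" R] mult_right_mono[of c "R - 1" A]
    by (simp_all add: algebra_simps)
  then have "\<bar>x\<bar> < R * A"
    unfolding x_def using assms(1-4) by linarith
  then have "x = 0"
    using zero_if_coprime_dvd_abs_less[OF assms(5) \<open>R dvd x\<close> \<open>A dvd x\<close>] by blast
  then show ?thesis unfolding x_def u_def c_def by simp
qed

lemma inv_mod_cong:
  assumes "0 < r" "coprime a r"
  shows "inv_mod r a < r \<and> [a * inv_mod r a = 1] (mod r)"
proof -
  obtain x where x: "[a * x = 1] (mod r)"
    using cong_solve_coprime_nat[OF assms(2)] by auto
  have ex: "x mod r < r \<and> (a * (x mod r)) mod r = 1 mod r"
    using x assms(1) by (simp add: cong_def mod_mult_right_eq)
  have uniq: "b1 = b2"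
    if "b1 < r \<and> (a * b1) mod r = 1 mod r" "b2 < r \<and> (a * b2) mod r = 1 mod r" for b1 b2
  proof -
    have "[a * b1 = a * b2] (mod r)" using that by (simp add: cong_def)
    then have "[b1 = b2] (mod r)" using cong_mult_lcancel_nat assms(2) by blast
    then show ?thesis using that cong_less_modulus_unique_nat by blast
  qed
  have "\<exists>!b. b < r \<and> (a * b) mod r = 1 mod r" using ex uniq by blast
  then have "inv_mod r a < r \<and> (a * inv_mod r a) mod r = 1 mod r"
    unfolding inv_mod_def by (rule theI')
  then show ?thesis by (simp add: cong_def)
qed

lemma inv_mod_cong_int:
  assumes "0 < r" "coprime a r"
  shows "[int a * int (inv_mod r a) = 1] (mod int r)"
  using inv_mod_cong[OF assms] cong_int_iff[of "a * inv_mod r a" 1 r] by simp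

lemma coprime_diff_self:
  fixes a r :: nat
  assumes "a < r" "coprime a r"
  shows "coprime r (r - a)"
proof (rule coprimeI)
  fix d :: nat assume d: "d dvd r" "d dvd r - a"
  then have "d dvd a" using dvd_diff_nat[of d r "r - a"] assms(1) by simp
  then show "is_unit d" using assms(2) d coprime_common_divisor by blast
qed

lemma coprime_aL:
  assumes "a < r" "coprime a r"
  shows "coprime (aL r a) (r - a)"
  using coprime_diff_self[OF assms] assms(1) unfolding aL_def by simp

lemma coprime_aR:
  assumes "0 < a" "coprime a r"
  shows "coprime (aR r a) a"
proof -
  have "coprime (- int r) (int a)"
    using assms(2) by (simp add: coprime_commute)
  then have "coprime ((- int r) mod int a) (int a)"
    using assms(1) by simp
  then show ?thesis unfolding aR_def
    by (metis coprime_int_iff nat_0_le of_nat_0_less_iff pos_mod_sign assms(1))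
qed

lemma inv_mod_aL_cong:
  assumes "a < r" "coprime a r"
  shows "[int r * int (inv_mod (r - a) (aL r a)) = 1] (mod int (r - a))"
proof -
  have "[int (aL r a) * int (inv_mod (r - a) (aL r a)) = 1] (mod int (r - a))"
    using inv_mod_cong_int[OF _ coprime_aL[OF assms]] assms(1) by simp
  moreover have "int (aL r a) mod int (r - a) = int r mod int (r - a)"
    unfolding aL_def by (simp add: of_nat_mod)
  ultimately show ?thesis
    by (metis cong_def mod_mult_left_eq)
qed

lemma inv_mod_aR_cong:
  assumes "0 < a" "coprime a r"
  shows "[(- int r) * int (inv_mod a (aR r a)) = 1] (mod int a)"
proof -
  have "[int (aR r a) * int (inv_mod a (aR r a)) = 1] (mod int a)"
    using inv_mod_cong_int coprime_aR[OF assms] assms(1) by simp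
  moreover have "int (aR r a) = (- int r) mod int a"
    using assms(1) by (simp add: aR_def)
  ultimately show ?thesis
    by (metis cong_def mod_mult_left_eq)
qed

lemma phiL_e1: "phiL r a e1 = e1"
  by (simp add: phiL_def e1_def)

lemma phiR_e1: "phiR r a e1 = e1"
  by (simp add: phiR_def e1_def)

lemma pt_0: "0 < r \<Longrightarrow> pt r a 0 = e2"
  by (simp add: pt_def e2_def)

lemma pt_self: "0 < r \<Longrightarrow> pt r a r = e3"
  by (simp add: pt_def e3_def)

lemma pt_eq_iff: "0 < r \<Longrightarrow> pt r a k = pt r a k' \<longleftrightarrow> k = k'"
  by (auto simp add: pt_def)

lemma pt_ne_e1: "0 < r \<Longrightarrow> pt r a k \<noteq> e1"
  by (simp add: pt_def e1_def)

lemma phiL_pt: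
  assumes "0 < a" "a < r" "coprime a r" "k \<le> r - a"
  shows "phiL r a (pt (r - a) (aL r a) k) = pt r a k"
proof -
  define d where "d = r - a"
  define u where "u = (- int k * int (inv_mod d (aL r a))) mod int d"
  define c where "c = (- int k * int (inv_mod r a)) mod int r"
  have inv_L: "[int r * int (inv_mod d (aL r a)) = 1] (mod int d)"
    using inv_mod_aL_cong[OF assms(2,3)] unfolding d_def .
  have "[int a * int (inv_mod r a) = 1] (mod int r)"
    using inv_mod_cong_int assms(2,3) by simp
  then have inv: "[(int r - int d) * int (inv_mod r a) = 1] (mod int r)"
    using assms(2) unfolding d_def by (simp add: of_nat_diff)
  have coprime: "coprime (int r) (int d)"
    using coprime_diff_self[OF assms(2,3)] unfolding d_def by simp
  have "int r * u + int k = c * int d"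
    unfolding u_def c_def
    by (rule residue_identity_L[OF _ _ _ _ coprime inv_L inv]) (use assms(1,2,4) d_def in simp_all)
  then have key: "of_int u * rat_of_nat r + rat_of_nat k = of_int c * rat_of_nat d"
    by (metis of_int_add of_int_mult of_int_of_nat_eq mult.commute)
  have r: "rat_of_nat r \<noteq> 0" and d: "rat_of_nat d \<noteq> 0"
    and r_rat: "rat_of_nat r = rat_of_nat a + rat_of_nat d"
    using assms(2) unfolding d_def by (simp_all add: of_nat_diff)
  have "of_int u / rat_of_nat d + rat_of_nat k / rat_of_nat d / rat_of_nat r
      = (of_int u * rat_of_nat r + rat_of_nat k) / (rat_of_nat d * rat_of_nat r)"
    using r d by (simp add: field_simps)
  also have "\<dots> = of_int c / rat_of_nat r"
    unfolding key using d by simp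
  finally have x: "of_int u / rat_of_nat d + rat_of_nat k / rat_of_nat d / rat_of_nat r
      = of_int c / rat_of_nat r" .
  have y: "of_int (int d - int k) / rat_of_nat d + rat_of_nat k / rat_of_nat d * rat_of_nat a / rat_of_nat r
      = of_int (int r - int k) / rat_of_nat r"
  proof -
    have "of_int (int d - int k) / rat_of_nat d + rat_of_nat k / rat_of_nat d * rat_of_nat a / rat_of_nat r
        = ((rat_of_nat d - rat_of_nat k) * rat_of_nat r + rat_of_nat k * rat_of_nat a)
          / (rat_of_nat d * rat_of_nat r)"
      using r d by (simp add: field_simps)
    also have "(rat_of_nat d - rat_of_nat k) * rat_of_nat r + rat_of_nat k * rat_of_nat a
        = rat_of_nat d * (rat_of_nat r - rat_of_nat k)"
      unfolding r_rat by (simp add: algebra_simps)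
    finally show ?thesis using d by simp
  qed
  have z: "rat_of_nat k / rat_of_nat d * rat_of_nat d / rat_of_nat r = rat_of_nat k / rat_of_nat r"
    using d by simp
  show ?thesis
    unfolding pt_def phiL_def d_def[symmetric] u_def[symmetric] c_def[symmetric]
    by (simp only: prod.case x y z)
qed

lemma phiR_pt:
  assumes "0 < a" "a < r" "coprime a r" "k \<le> a"
  shows "phiR r a (pt a (aR r a) k) = pt r a (r - a + k)"
proof -
  define u where "u = (- int k * int (inv_mod a (aR r a))) mod int a"
  define c where "c = (- int (r - a + k) * int (inv_mod r a)) mod int r"
  have inv_R: "[(- int r) * int (inv_mod a (aR r a)) = 1] (mod int a)"
    using inv_mod_aR_cong[OF assms(1,3)] .
  have inv: "[int a * int (inv_mod r a) = 1] (mod int r)"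
    using inv_mod_cong_int assms(2,3) by simp
  have coprime: "coprime (int r) (int a)"
    using assms(3) by (simp add: coprime_commute)
  have cast: "int (r - a + k) = int r - int a + int k"
    using assms(2) by simp
  have "int r * u + int a - int k = c * int a"
    unfolding u_def c_def cast
    by (intro residue_identity_R[OF _ _ _ _ coprime inv_R inv]) (use assms(1,2,4) in simp_all)
  then have key: "of_int u * rat_of_nat r + of_int (int a - int k) = of_int c * rat_of_nat a"
    by (metis add_diff_eq of_int_add of_int_mult of_int_of_nat_eq mult.commute)
  have r: "rat_of_nat r \<noteq> 0" and a: "rat_of_nat a \<noteq> 0"
    using assms(1,2) by simp_all
  have "of_int u / rat_of_nat a + of_int (int a - int k) / rat_of_nat a / rat_of_nat r
      = (of_int u * rat_of_nat r + of_int (int a - int k)) / (rat_of_nat a * rat_of_nat r)"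
    using r a by (simp add: field_simps)
  also have "\<dots> = of_int c / rat_of_nat r"
    unfolding key using a by simp
  finally have x: "of_int u / rat_of_nat a + of_int (int a - int k) / rat_of_nat a / rat_of_nat r
      = of_int c / rat_of_nat r" .
  have y: "of_int (int a - int k) / rat_of_nat a * rat_of_nat a / rat_of_nat r
      = of_int (int r - int (r - a + k)) / rat_of_nat r"
    using a cast by simp
  have z: "rat_of_nat k / rat_of_nat a + of_int (int a - int k) / rat_of_nat a * rat_of_nat (r - a) / rat_of_nat r
      = rat_of_nat (r - a + k) / rat_of_nat r"
    using r a assms(2,4) by (simp add: field_simps of_nat_diff)
  show ?thesis
    unfolding pt_def phiR_def u_def[symmetric] c_def[symmetric]
    by (simp only: prod.case x y z)
qed

lemma fan_rays_danilov_fan: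
  assumes "0 < r" "coprime a r"
  shows "fan_rays (danilov_fan r a) \<subseteq> insert e1 (pt r a ` {..r})"
  using assms
proof (induction r a rule: danilov_fan.induct)
  case (1 r a)
  show ?case
  proof (cases "0 < a \<and> a < r")
    case True
    have "fan_rays (danilov_fan r a) = {e2, e3, pt r a (r - a)}
        \<union> phiL r a ` fan_rays (danilov_fan (r - a) (aL r a))
        \<union> phiR r a ` fan_rays (danilov_fan a (aR r a))"
      using True by (subst danilov_fan.simps) (auto simp: fan_rays_def)
    moreover have "phiL r a ` fan_rays (danilov_fan (r - a) (aL r a)) \<subseteq> insert e1 (pt r a ` {..r})"
    proof -
      have "fan_rays (danilov_fan (r - a) (aL r a)) \<subseteq> insert e1 (pt (r - a) (aL r a) ` {..r - a})"
        using "1.IH"(1) True coprime_aL "1.prems"(2) by simp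
      then have "phiL r a ` fan_rays (danilov_fan (r - a) (aL r a))
          \<subseteq> phiL r a ` insert e1 (pt (r - a) (aL r a) ` {..r - a})"
        by (rule image_mono)
      also have "\<dots> = insert e1 (pt r a ` {..r - a})"
        unfolding image_insert image_image phiL_e1
        using phiL_pt[OF _ _ "1.prems"(2)] True by (intro arg_cong[of _ _ "insert e1"] image_cong) auto
      finally show ?thesis by auto
    qed
    moreover have "phiR r a ` fan_rays (danilov_fan a (aR r a)) \<subseteq> insert e1 (pt r a ` {..r})"
    proof -
      have "fan_rays (danilov_fan a (aR r a)) \<subseteq> insert e1 (pt a (aR r a) ` {..a})"
        using "1.IH"(2) True coprime_aR "1.prems"(2) by simp
      then have "phiR r a ` fan_rays (danilov_fan a (aR r a))
          \<subseteq> phiR r a ` insert e1 (pt a (aR r a) ` {..a})"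
        by (rule image_mono)
      also have "\<dots> = insert e1 ((\<lambda>k. pt r a (r - a + k)) ` {..a})"
        unfolding image_insert image_image phiR_e1
        using phiR_pt[OF _ _ "1.prems"(2)] True by (intro arg_cong[of _ _ "insert e1"] image_cong) auto
      finally show ?thesis using True by auto
    qed
    moreover have "{e2, e3, pt r a (r - a)} \<subseteq> insert e1 (pt r a ` {..r})"
      using pt_0[of r a, symmetric] pt_self[of r a, symmetric] "1.prems"(1) by auto
    ultimately show ?thesis by blast
  next
    case False
    have "fan_rays (danilov_fan r a) = {e1, e2, e3}"
      by (subst danilov_fan.simps) (simp add: fan_rays_def if_not_P[OF False])
    then show ?thesis
      using pt_0[of r a, symmetric] pt_self[of r a, symmetric] "1.prems"(1) by auto
  qed
qed

lemma Zdiv_pt: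
  assumes "0 < r"
  shows "Zdiv r a i (pt r a k) = (if tau r a i < k \<and> k \<le> r then 1 else 0)"
proof -
  have "Zdiv r a i (pt r a k) = (\<Sum>k'\<in>{tau r a i + 1..r}. if k' = k then 1 else 0)"
    unfolding Zdiv_def Ddiv_def using pt_eq_iff[OF assms] by (intro sum.cong) auto
  then show ?thesis by (simp add: sum.delta')
qed

lemma Zdiv_e1: "0 < r \<Longrightarrow> Zdiv r a i e1 = 0"
  unfolding Zdiv_def Ddiv_def using pt_ne_e1 by (simp add: eq_commute[of e1])

lemma tau_base: "a = 1 \<or> a = r - 1 \<Longrightarrow> tau r a i = nat ((int a * int i - 1) mod int r)"
  by (subst tau.simps) simp

lemma tau_rec:
  assumes "a \<noteq> 1" "a \<noteq> r - 1" "0 < a" "a < r"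
  shows "tau r a i = (if a \<le> i then tau (r - a) (r mod (r - a)) (i mod (r - a))
                      else (r - a) + tau a (nat ((- int r) mod int a)) i)"
  using assms by (subst tau.simps) simp

lemma tau_one:
  assumes "i < r"
  shows "tau r 1 i = (if i = 0 then r - 1 else i - 1)"
proof -
  have "(int 1 * int i - 1) mod int r = int (if i = 0 then r - 1 else i - 1)"
  proof (cases "i = 0")
    case True
    then show ?thesis
      by (intro mod_eq_of_add_mult[where q = "- 1"]) (use assms in \<open>simp_all add: of_nat_diff\<close>)
  qed (use assms in \<open>simp add: of_nat_diff\<close>)
  then show ?thesis using tau_base[of 1 r i] by simp
qed

lemma tau_pred:
  assumes "i < r"
  shows "tau r (r - 1) i = r - 1 - i"
proof -
  have "(int (r - 1) * int i - 1) mod int r = int (r - 1 - i)"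
    by (rule mod_eq_of_add_mult[where q = "int i - 1"])
      (use assms in \<open>simp_all add: of_nat_diff algebra_simps\<close>)
  then show ?thesis using tau_base[of "r - 1" r i] by simp
qed

lemma tau_ge:
  assumes "0 < a" "a \<le> j" "j < r"
  shows "tau r a j = tau (r - a) (aL r a) (j mod (r - a))"
proof -
  consider (pred) "a = r - 1" | (one) "a = 1" "a \<noteq> r - 1" | (rec) "a \<noteq> 1" "a \<noteq> r - 1"
    by blast
  then show ?thesis
  proof cases
    case pred
    then have "j = r - 1" "r - a = 1" "aL r a = 1 - 1" using assms by (simp_all add: aL_def)
    then show ?thesis using tau_pred[of "r - 1" r] tau_pred[of 0 1] assms(3) pred by simp
  next
    case one
    then have "3 \<le> r" using assms by linarith
    have "r mod (r - 1) = (1 + (r - 1)) mod (r - 1)" using \<open>3 \<le> r\<close> by simp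
    also have "\<dots> = 1 mod (r - 1)" by (rule mod_add_self2)
    also have "\<dots> = 1" using \<open>3 \<le> r\<close> by simp
    finally have "aL r a = 1" unfolding aL_def using one by simp
    moreover have "tau (r - 1) 1 (j mod (r - 1)) = j - 1"
    proof (cases "j < r - 1")
      case True
      then show ?thesis using tau_one[of j "r - 1"] assms(2) one by simp
    next
      case False
      then have "j = r - 1" using assms(3) by simp
      then have "j mod (r - 1) = 0" by simp
      then show ?thesis using tau_one[of 0 "r - 1"] False assms(3) \<open>3 \<le> r\<close> by simp
    qed
    ultimately show ?thesis using tau_one[OF assms(3)] assms(2) one by simp
  next
    case rec
    then show ?thesis using tau_rec[OF rec assms(1)] assms by (simp add: aL_def)
  qed
qed

lemma tau_less:
  assumes "0 < a" "a < r" "i < a"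
  shows "tau r a i = (r - a) + tau a (aR r a) i"
proof -
  consider (one) "a = 1" | (pred) "a \<noteq> 1" "a = r - 1" | (rec) "a \<noteq> 1" "a \<noteq> r - 1"
    by blast
  then show ?thesis
  proof cases
    case one
    then have "i = 0" "aR r a = 1 - 1" using assms by (simp_all add: aR_def)
    then show ?thesis using tau_one[of 0 r] tau_pred[of 0 1] assms one by simp
  next
    case pred
    then have "3 \<le> r" using assms by linarith
    have "(- int r) mod int (r - 1) = int (r - 2)"
      by (rule mod_eq_of_add_mult[where q = "- 2"]) (use \<open>3 \<le> r\<close> in \<open>simp_all add: of_nat_diff\<close>)
    then have "aR r a = a - 1" unfolding aR_def using pred by simp
    then have "tau a (aR r a) i = a - 1 - i" using tau_pred[of i a] assms(3) by simp
    moreover have "tau r a i = r - 1 - i" using tau_pred[of i r] assms(2,3) pred by simp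
    moreover have "r - 1 - i = (r - a) + (a - 1 - i)" using assms(2,3) by linarith
    ultimately show ?thesis by simp
  next
    case rec
    then show ?thesis using tau_rec[OF rec assms(1,2)] assms(3) by (simp add: aR_def)
  qed
qed

lemma restrL_Zdiv:
  assumes "0 < a" "a < r" "coprime a r" "a \<le> j" "j < r"
    and "w \<in> fan_rays (danilov_fan (r - a) (aL r a))"
  shows "restrL r a (Zdiv r a j) w = Zdiv (r - a) (aL r a) (j mod (r - a)) w"
proof -
  have "0 < r - a" using assms(2) by simp
  then have "w \<in> insert e1 (pt (r - a) (aL r a) ` {..r - a})"
    using fan_rays_danilov_fan[OF _ coprime_aL[OF assms(2,3)]] assms(6) by blast
  then consider "w = e1" | k where "k \<le> r - a" "w = pt (r - a) (aL r a) k"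
    by blast
  then show ?thesis
  proof cases
    case 1
    then show ?thesis unfolding restrL_def using phiL_e1 Zdiv_e1 assms(2) by simp
  next
    case 2
    then have "restrL r a (Zdiv r a j) w = Zdiv r a j (pt r a k)"
      unfolding restrL_def using phiL_pt[OF assms(1-3)] by simp
    also have "\<dots> = Zdiv (r - a) (aL r a) (j mod (r - a)) w"
      using 2 Zdiv_pt[of r] Zdiv_pt[of "r - a"] tau_ge[OF assms(1,4,5)] assms(2) by auto
    finally show ?thesis .
  qed
qed

lemma restrR_Zdiv:
  assumes "0 < a" "a < r" "coprime a r" "i < a"
    and "w \<in> fan_rays (danilov_fan a (aR r a))"
  shows "restrR r a (Zdiv r a i) w = Zdiv a (aR r a) i w"
proof -
  have "w \<in> insert e1 (pt a (aR r a) ` {..a})"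
    using fan_rays_danilov_fan[OF assms(1) coprime_aR[OF assms(1,3)]] assms(5) by blast
  then consider "w = e1" | k where "k \<le> a" "w = pt a (aR r a) k"
    by blast
  then show ?thesis
  proof cases
    case 1
    then show ?thesis unfolding restrR_def using phiR_e1 Zdiv_e1 assms(1,2) by simp
  next
    case 2
    then have "restrR r a (Zdiv r a i) w = Zdiv r a i (pt r a (r - a + k))"
      unfolding restrR_def using phiR_pt[OF assms(1-3)] by simp
    also have "\<dots> = Zdiv a (aR r a) i w"
      using 2 Zdiv_pt[of r] Zdiv_pt[of a] tau_less[OF assms(1,2,4)] assms(1,2) by auto
    finally show ?thesis .
  qed
qed

theorem mainTheorem3:
  fixes r a :: nat
  assumes "0 < a" and "a < r" and "coprime a r"
  shows "(\<forall>i s. L_brick r a i s \<longrightarrow>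
            (\<forall>w \<in> fan_rays (danilov_fan (r - a) (aL r a)).
               restrL r a (Zdiv r a (i + s * (r - a))) w = Zdiv (r - a) (aL r a) i w))
       \<and> (\<forall>i s. R_brick r a i s \<longrightarrow>
            (\<forall>w \<in> fan_rays (danilov_fan a (aR r a)).
               restrR r a (Zdiv r a i) w = Zdiv a (aR r a) i w))"
proof (intro conjI allI impI ballI)
  fix i s w
  assume "L_brick r a i s" and w: "w \<in> fan_rays (danilov_fan (r - a) (aL r a))"
  then have "i < r - a" "r < i + s * (r - a) + (r - a)" "i + s * (r - a) < r"
    unfolding L_brick_def by (auto simp: algebra_simps)
  then have "a \<le> i + s * (r - a)" "(i + s * (r - a)) mod (r - a) = i"
    by simp_all
  then show "restrL r a (Zdiv r a (i + s * (r - a))) w = Zdiv (r - a) (aL r a) i w"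
    using restrL_Zdiv[OF assms _ \<open>i + s * (r - a) < r\<close> w] by simp
next
  fix i s w
  assume "R_brick r a i s" and "w \<in> fan_rays (danilov_fan a (aR r a))"
  then show "restrR r a (Zdiv r a i) w = Zdiv a (aR r a) i w"
    using restrR_Zdiv[OF assms] unfolding R_brick_def by blast
qed

end
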